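(* Let $E$ be a directed graph and let $G(E)$ carry a Hausdorff topology making it a topological semigroup such that its set of idempotents $E(G(E))$ is compact. Then $G(E)$ is closed in every topological semigroup $S$ which contains $G(E)$ as a subsemigroup (and topological subspace).
   Context: All spaces are Hausdorff. $E(T)$ denotes the set of idempotents of a semigroup $T$. A directed graph $E=(E^0,E^1,r,s)$ has vertices $E^0$, edges $E^1$, source/range maps $s,r:E^1\to E^0$; paths are vertices and sequences of edges $e_1\ldots e_n$ with $r(e_i)=s(e_{i+1})$. The graph inverse semigroup $G(E)$ is the semigroup with zero $0$ generated by $E^0$, $E^1$, $E^{-1}=\{e^{-1}\mid e\in E^1\}$ subject to: for $a,b\in E^0$, $e,f\in E^1$: $ab=a$ if $a=b$, else $0$; $s(e)e=er(e)=e$; $e^{-1}s(e)=r(e)e^{-1}=e^{-1}$; $e^{-1}f=r(e)$ if $e=f$, else $0$. Non-zero elements are uniquely $uv^{-1}$ with paths $u,v$, $r(u)=r(v)$, multiplied by $u_1v_1^{-1}\cdot u_2v_2^{-1}=u_1wv_2^{-1}$ if $u_2=v_1w$, $u_1(v_2w)^{-1}$ if $v_1=u_2w$, else $0$. *)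

theory Defs
  imports "HOL-Analysis.Analysis"
begin

text \<open>A path is represented as a pair (a, es) of its
  source vertex a and its list of edges es; the vertex a itself is the path (a, []).\<close>

definition is_graph :: "'v set \<Rightarrow> 'e set \<Rightarrow> ('e \<Rightarrow> 'v) \<Rightarrow> ('e \<Rightarrow> 'v) \<Rightarrow> bool" where
  "is_graph V Ed src rng \<longleftrightarrow> (\<forall>e\<in>Ed. src e \<in> V \<and> rng e \<in> V)"

type_synonym ('v, 'e) path = "'v \<times> 'e list"

definition is_path :: "'v set \<Rightarrow> 'e set \<Rightarrow> ('e \<Rightarrow> 'v) \<Rightarrow> ('e \<Rightarrow> 'v) \<Rightarrow> ('v, 'e) path \<Rightarrow> bool" where
  "is_path V Ed src rng p \<longleftrightarrow>
     (case p of (a, es) \<Rightarrow>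
        a \<in> V \<and> set es \<subseteq> Ed \<and>
        (es \<noteq> [] \<longrightarrow> src (hd es) = a) \<and>
        (\<forall>i. Suc i < length es \<longrightarrow> rng (es ! i) = src (es ! Suc i)))"

definition path_rng :: "('e \<Rightarrow> 'v) \<Rightarrow> ('v, 'e) path \<Rightarrow> 'v" where
  "path_rng rng p = (if snd p = [] then fst p else rng (last (snd p)))"

text \<open>Concatenation u w of paths (meaningful when r(u) = s(w)).\<close>
definition path_cat :: "('v, 'e) path \<Rightarrow> ('v, 'e) path \<Rightarrow> ('v, 'e) path" where
  "path_cat u w = (fst u, snd u @ snd w)"

definition path_prefix :: "('v, 'e) path \<Rightarrow> ('v, 'e) path \<Rightarrow> bool" where
  "path_prefix p q \<longleftrightarrow> fst p = fst q \<and> (\<exists>ws. snd q = snd p @ ws)"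

definition path_rest :: "('e \<Rightarrow> 'v) \<Rightarrow> ('v, 'e) path \<Rightarrow> ('v, 'e) path \<Rightarrow> ('v, 'e) path" where
  "path_rest rng p q = (path_rng rng p, drop (length (snd p)) (snd q))"

text \<open>Elements of the graph inverse semigroup: 0 or u v^{-1}.\<close>
datatype ('v, 'e) gis = GZero | GElem "('v, 'e) path" "('v, 'e) path"

definition gis_carrier :: "'v set \<Rightarrow> 'e set \<Rightarrow> ('e \<Rightarrow> 'v) \<Rightarrow> ('e \<Rightarrow> 'v) \<Rightarrow> ('v, 'e) gis set" where
  "gis_carrier V Ed src rng =
     insert GZero {GElem u v | u v. is_path V Ed src rng u \<and> is_path V Ed src rng v \<and>
                                     path_rng rng u = path_rng rng v}"

fun gis_mult :: "('e \<Rightarrow> 'v) \<Rightarrow> ('v, 'e) gis \<Rightarrow> ('v, 'e) gis \<Rightarrow> ('v, 'e) gis" where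
  "gis_mult rng GZero y = GZero"
| "gis_mult rng (GElem u v) GZero = GZero"
| "gis_mult rng (GElem u1 v1) (GElem u2 v2) =
     (if path_prefix v1 u2 then GElem (path_cat u1 (path_rest rng v1 u2)) v2
      else if path_prefix u2 v1 then GElem u1 (path_cat v2 (path_rest rng u2 v1))
      else GZero)"

definition top_semigroup :: "'a topology \<Rightarrow> ('a \<Rightarrow> 'a \<Rightarrow> 'a) \<Rightarrow> bool" where
  "top_semigroup T m \<longleftrightarrow>
     Hausdorff_space T \<and>
     (\<forall>x\<in>topspace T. \<forall>y\<in>topspace T. m x y \<in> topspace T) \<and>
     (\<forall>x\<in>topspace T. \<forall>y\<in>topspace T. \<forall>z\<in>topspace T. m (m x y) z = m x (m y z)) \<and>
     continuous_map (prod_topology T T) T (\<lambda>(x, y). m x y)"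

end

(*
  In G(E) every nonzero idempotent p p^-1 is isolated in E(G(E)). Idempotents close to
  p p^-1 lie below it, hence below one of its children (p e)(p e)^-1; by compactness of
  E(G(E)), p p^-1 is then a limit of these pairwise orthogonal children, and continuity of
  the multiplication forces (p p^-1)^2 = 0.

  Now let x be a point of S in the closure of G(E) but not in G(E). Since 0 is a zero of
  G(E), also 0 x = x 0 = 0 \<noteq> x, so every idempotent fixing x from one side is isolated in the
  compact set E(G(E)). A compactness argument then gives a neighbourhood of x in which only
  finitely many idempotents act as left identities and only finitely many act as right
  identities. As u v^-1 is determined by its left and right identities u u^-1 and v v^-1,
  this neighbourhood meets G(E) in a finite set, so x is not a limit point of G(E).
*)
theory Submission
  imports Defs
begin

section \<open>Limit points and continuous binary operations\<close>

lemma embedding_map_imp_continuous_map: "embedding_map X Y f \<Longrightarrow> continuous_map X Y f"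
  unfolding embedding_map_def
  using homeomorphic_imp_continuous_map continuous_map_in_subtopology by blast

lemma embedding_map_imp_inj_on: "embedding_map X Y f \<Longrightarrow> inj_on f (topspace X)"
  unfolding embedding_map_def by (rule homeomorphic_imp_injective_map)

lemma embedding_map_derived_set_of:
  assumes "embedding_map X Y f" "S \<subseteq> topspace X" "x \<in> topspace X"
  shows "f x \<in> Y derived_set_of (f ` S) \<longleftrightarrow> x \<in> X derived_set_of S"
proof -
  have hom: "homeomorphic_map X (subtopology Y (f ` topspace X)) f"
    using assms(1) by (simp add: embedding_map_def)
  have "f ` topspace X \<inter> Y derived_set_of (f ` S) = f ` (X derived_set_of S)"
    using homeomorphic_map_derived_set_of[OF hom assms(2)] assms(2)
    by (simp add: derived_set_of_subtopology Int_absorb1 image_mono)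
  moreover have "inj_on f (topspace X)"
    using assms(1) by (rule embedding_map_imp_inj_on)
  ultimately show ?thesis
    using assms(3) derived_set_of_subset_topspace by (metis IntD2 IntI image_eqI inj_on_image_mem_iff)
qed

lemma in_derived_set_ofE:
  assumes "x \<in> X derived_set_of S" "openin X W" "x \<in> W"
  obtains y where "y \<noteq> x" "y \<in> S" "y \<in> W"
  using assms unfolding in_derived_set_of by blast

lemma continuous_map_binop_left:
  assumes "continuous_map (prod_topology X X) X (\<lambda>(x, y). m x y)" "c \<in> topspace X"
  shows "continuous_map X X (m c)"
proof -
  have "continuous_map X (prod_topology X X) (\<lambda>y. (c, y))"
    using assms(2) by (intro continuous_map_pairedI) auto
  from continuous_map_compose[OF this assms(1)] show ?thesis
    by (simp add: o_def)
qed

lemma continuous_map_binop_in_topspace: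
  assumes "continuous_map (prod_topology X X) X (\<lambda>(x, y). m x y)" "a \<in> topspace X" "b \<in> topspace X"
  shows "m a b \<in> topspace X"
  using continuous_map_image_subset_topspace[OF assms(1)] assms(2,3) by force

lemma continuous_map_binop_swap:
  assumes "continuous_map (prod_topology X X) X (\<lambda>(x, y). m x y)"
  shows "continuous_map (prod_topology X X) X (\<lambda>(x, y). m y x)"
proof -
  have "continuous_map (prod_topology X X) (prod_topology X X) (\<lambda>z. (snd z, fst z))"
    by (intro continuous_map_pairedI continuous_map_fst continuous_map_snd)
  from continuous_map_compose[OF this assms] show ?thesis
    by (simp add: o_def case_prod_unfold)
qed

lemma continuous_map_binop_nbhds:
  assumes "continuous_map (prod_topology X X) X (\<lambda>(x, y). m x y)" "openin X A"
    and "a \<in> topspace X" "b \<in> topspace X" "m a b \<in> A"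
  obtains U V where "openin X U" "openin X V" "a \<in> U" "b \<in> V" "\<forall>x\<in>U. \<forall>y\<in>V. m x y \<in> A"
proof -
  define P where "P = {z \<in> topspace (prod_topology X X). (\<lambda>(x, y). m x y) z \<in> A}"
  have "openin (prod_topology X X) P"
    unfolding P_def using assms(1,2) by (rule openin_continuous_map_preimage)
  moreover have "(a, b) \<in> P"
    unfolding P_def using assms(3-5) by simp
  ultimately obtain U V where UV: "openin X U" "openin X V" "a \<in> U" "b \<in> V" "U \<times> V \<subseteq> P"
    unfolding openin_prod_topology_alt by meson
  have "m x y \<in> A" if "x \<in> U" "y \<in> V" for x y
  proof -
    have "(x, y) \<in> P"
      using UV(5) that by blast
    then show ?thesis
      by (simp add: P_def)
  qed
  with UV(1-4) show thesis
    using that by blast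
qed

lemma closure_of_left_zero:
  assumes "Hausdorff_space X" "continuous_map (prod_topology X X) X (\<lambda>(x, y). m x y)"
    and "z \<in> topspace X" "A \<subseteq> topspace X" "\<forall>a\<in>A. m z a = z"
    and "x \<in> X closure_of A"
  shows "m z x = z"
proof -
  have "continuous_map X X (\<lambda>_. z)"
    using assms(3) by simp
  then have "closedin X {y \<in> topspace X. m z y = z}"
    using closedin_continuous_maps_eq[OF assms(1) continuous_map_binop_left[OF assms(2,3)]]
    by blast
  with assms(4,5) have "X closure_of A \<subseteq> {y \<in> topspace X. m z y = z}"
    by (intro closure_of_minimal) auto
  with assms(6) show ?thesis
    by blast
qed

lemma closure_of_zero:
  assumes "Hausdorff_space X" "continuous_map (prod_topology X X) X (\<lambda>(x, y). m x y)"
    and "z \<in> topspace X" "A \<subseteq> topspace X" "\<forall>a\<in>A. m z a = z \<and> m a z = z"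
    and "x \<in> X closure_of A"
  shows "m z x = z \<and> m x z = z"
  using closure_of_left_zero[OF assms(1-4) _ assms(6)]
    closure_of_left_zero[where m = "\<lambda>a b. m b a", OF assms(1) continuous_map_binop_swap[OF assms(2)]
      assms(3,4) _ assms(6)] assms(5)
  by simp

lemma derived_set_of_orthogonal:
  assumes "Hausdorff_space X" "continuous_map (prod_topology X X) X (\<lambda>(x, y). m x y)"
    and "x \<in> X derived_set_of D" "\<forall>d\<in>D. \<forall>d'\<in>D. d \<noteq> d' \<longrightarrow> m d d' = z"
  shows "m x x = z"
proof (rule ccontr)
  assume "m x x \<noteq> z"
  have x: "x \<in> topspace X"
    using assms(3) by (simp add: in_derived_set_of)
  have "m x x \<in> topspace X - {z}"
    using \<open>m x x \<noteq> z\<close> continuous_map_binop_in_topspace[OF assms(2) x x] by blast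
  then obtain U V where UV: "openin X U" "openin X V" "x \<in> U" "x \<in> V"
      and prod: "\<forall>a\<in>U. \<forall>b\<in>V. m a b \<in> topspace X - {z}"
    by (rule continuous_map_binop_nbhds[OF assms(2) open_in_Hausdorff_delete[OF assms(1) openin_topspace] x x])
  have W: "openin X (U \<inter> V)" "x \<in> U \<inter> V"
    using openin_Int[OF UV(1,2)] UV(3,4) by auto
  obtain d where d: "d \<noteq> x" "d \<in> D" "d \<in> U \<inter> V"
    using in_derived_set_ofE[OF assms(3) W] .
  have "openin X (U \<inter> V - {d})" "x \<in> U \<inter> V - {d}"
    using open_in_Hausdorff_delete[OF assms(1) W(1)] W(2) d(1) by auto
  then obtain d' where d': "d' \<noteq> x" "d' \<in> D" "d' \<in> U \<inter> V - {d}"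
    using in_derived_set_ofE[OF assms(3)] by blast
  have "m d d' \<in> topspace X - {z}"
    using prod d(3) d'(3) by blast
  moreover have "m d d' = z"
    using assms(4) d(2) d'(2,3) by (metis DiffE singletonI)
  ultimately show False
    by simp
qed

lemma finite_left_units_near:
  assumes X: "Hausdorff_space X" and m: "continuous_map (prod_topology X X) X (\<lambda>(x, y). m x y)"
    and K: "compactin X K" and D: "D \<subseteq> K" and x: "x \<in> topspace X"
    and isolated: "\<And>e. e \<in> K \<Longrightarrow> m e x = x \<Longrightarrow> e \<notin> X derived_set_of D"
  obtains N F where "openin X N" "x \<in> N" "finite F" "\<And>y e. y \<in> N \<Longrightarrow> e \<in> D \<Longrightarrow> m e y = y \<Longrightarrow> e \<in> F"
proof -
  have KX: "K \<subseteq> topspace X"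
    using K by (rule compactin_subset_topspace)
  (* Every e in K has a neighbourhood U e in which, for points near x, only e itself can
     act as a left identity: an isolated e by hypothesis, any other e because e x \<noteq> x
     persists nearby. Compactness then leaves finitely many candidates. *)
  have "\<exists>U N. openin X U \<and> openin X N \<and> e \<in> U \<and> x \<in> N \<and>
               (\<forall>y\<in>N. \<forall>e'\<in>U \<inter> D. m e' y = y \<longrightarrow> e' = e)" if e: "e \<in> K" for e
  proof (cases "m e x = x")
    case True
    then have "e \<notin> X derived_set_of D"
      using isolated e by blast
    then obtain U where "openin X U" "e \<in> U" "\<forall>e'\<in>U \<inter> D. e' = e"
      using e KX unfolding in_derived_set_of by blast
    then show ?thesis
      using x by blast
  next
    case False
    have eX: "e \<in> topspace X"
      using e KX by blast
    obtain A B where AB: "openin X A" "openin X B" "m e x \<in> A" "x \<in> B" "disjnt A B"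
      using X continuous_map_binop_in_topspace[OF m eX x] x False unfolding Hausdorff_space_def by blast
    obtain U N where UN: "openin X U" "openin X N" "e \<in> U" "x \<in> N" "\<forall>a\<in>U. \<forall>b\<in>N. m a b \<in> A"
      by (rule continuous_map_binop_nbhds[OF m AB(1) eX x AB(3)])
    have "\<forall>y\<in>N \<inter> B. \<forall>e'\<in>U \<inter> D. m e' y = y \<longrightarrow> e' = e"
    proof (intro ballI impI)
      fix y e' assume "y \<in> N \<inter> B" "e' \<in> U \<inter> D" "m e' y = y"
      then have "y \<in> A \<inter> B"
        using UN(5) by (metis IntD1 IntD2 IntI)
      with AB(5) show "e' = e"
        by (simp add: disjnt_def)
    qed
    with UN(1,3) openin_Int[OF UN(2) AB(2)] UN(4) AB(4) show ?thesis
      by blast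
  qed
  then obtain U N where UN: "\<And>e. e \<in> K \<Longrightarrow> openin X (U e) \<and> openin X (N e) \<and> e \<in> U e \<and> x \<in> N e \<and>
               (\<forall>y\<in>N e. \<forall>e'\<in>U e \<inter> D. m e' y = y \<longrightarrow> e' = e)"
    by metis
  have "\<forall>B\<in>U ` K. openin X B" "K \<subseteq> \<Union>(U ` K)"
    using UN by auto
  then obtain F where "finite F" "F \<subseteq> U ` K" "K \<subseteq> \<Union>F"
    using K unfolding compactin_def by meson
  then obtain I where I: "I \<subseteq> K" "finite I" "K \<subseteq> \<Union>(U ` I)"
    by (metis finite_subset_image)
  define N' where "N' = (\<Inter>e\<in>I. N e) \<inter> topspace X"
  have "openin X N'"
    unfolding N'_def using I(1,2) UN by (intro openin_INT) auto
  moreover have "x \<in> N'"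
    unfolding N'_def using I(1) UN x by auto
  moreover have "e \<in> I" if "y \<in> N'" "e \<in> D" "m e y = y" for y e
  proof -
    obtain i where i: "i \<in> I" "e \<in> U i"
      using I(3) D \<open>e \<in> D\<close> by blast
    have "y \<in> N i"
      using \<open>y \<in> N'\<close> i(1) unfolding N'_def by blast
    then have "e = i"
      using UN[of i] I(1) i \<open>e \<in> D\<close> \<open>m e y = y\<close> by blast
    with i(1) show ?thesis
      by simp
  qed
  ultimately show thesis
    using that I(2) by blast
qed

lemma no_left_units_near:
  assumes X: "Hausdorff_space X" and m: "continuous_map (prod_topology X X) X (\<lambda>(x, y). m x y)"
    and K: "compactin X K" and D: "D \<subseteq> K" and x: "x \<in> topspace X"
    and isolated: "\<And>e. e \<in> K \<Longrightarrow> m e x = x \<Longrightarrow> e \<notin> X derived_set_of D"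
    and moves: "\<And>e. e \<in> D \<Longrightarrow> m e x \<noteq> x"
  obtains N where "openin X N" "x \<in> N" "\<And>y e. y \<in> N \<Longrightarrow> e \<in> D \<Longrightarrow> m e y \<noteq> y"
proof -
  obtain N F where N: "openin X N" "x \<in> N" "finite F"
      and F: "\<And>y e. y \<in> N \<Longrightarrow> e \<in> D \<Longrightarrow> m e y = y \<Longrightarrow> e \<in> F"
    using finite_left_units_near[OF X m K D x isolated] by blast
  define fixed_by where "fixed_by e = {y \<in> topspace X. m e y = y}" for e
  have "closedin X (fixed_by e)" if "e \<in> D" for e
    using closedin_continuous_maps_eq[OF X continuous_map_binop_left[OF m] continuous_map_id, of e]
      that D compactin_subset_topspace[OF K]
    unfolding fixed_by_def by auto
  then have "closedin X (\<Union>(fixed_by ` (F \<inter> D)))"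
    using N(3) by (intro closedin_Union) auto
  then have "openin X (N - \<Union>(fixed_by ` (F \<inter> D)))"
    by (rule openin_diff[OF N(1)])
  moreover have "x \<in> N - \<Union>(fixed_by ` (F \<inter> D))"
    using N(2) moves unfolding fixed_by_def by auto
  moreover have "m e y \<noteq> y" if "y \<in> N - \<Union>(fixed_by ` (F \<inter> D))" "e \<in> D" for y e
    using that F openin_subset[OF N(1)] unfolding fixed_by_def by auto
  ultimately show thesis
    using that by blast
qed

lemma not_in_derived_set_of_two_sided_units:
  assumes X: "Hausdorff_space X" and m: "continuous_map (prod_topology X X) X (\<lambda>(x, y). m x y)"
    and K: "compactin X K" and x: "x \<in> topspace X"
    and l: "\<And>s. s \<in> G \<Longrightarrow> l s \<in> K \<and> m (l s) (f s) = f s"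
    and r: "\<And>s. s \<in> G \<Longrightarrow> r s \<in> K \<and> m (f s) (r s) = f s"
    and inj: "inj_on (\<lambda>s. (l s, r s)) G"
    and moves: "\<And>e. e \<in> K \<inter> X derived_set_of K \<Longrightarrow> m e x \<noteq> x \<and> m x e \<noteq> x"
  shows "x \<notin> X derived_set_of (f ` G)"
proof
  assume limit: "x \<in> X derived_set_of (f ` G)"
  have isolated_l: "e \<notin> X derived_set_of K" if "e \<in> K" "m e x = x" for e
    using moves that by blast
  have isolated_r: "e \<notin> X derived_set_of K" if "e \<in> K" "m x e = x" for e
    using moves that by blast
  obtain N1 F1 where N1: "openin X N1" "x \<in> N1" "finite F1"
      and F1: "\<And>y e. y \<in> N1 \<Longrightarrow> e \<in> K \<Longrightarrow> m e y = y \<Longrightarrow> e \<in> F1"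
    using finite_left_units_near[OF X m K subset_refl x isolated_l] by blast
  obtain N2 F2 where N2: "openin X N2" "x \<in> N2" "finite F2"
      and F2: "\<And>y e. y \<in> N2 \<Longrightarrow> e \<in> K \<Longrightarrow> m y e = y \<Longrightarrow> e \<in> F2"
    using finite_left_units_near[where m = "\<lambda>a b. m b a", OF X continuous_map_binop_swap[OF m] K subset_refl x isolated_r]
    by blast
  have "f ` G \<inter> (N1 \<inter> N2) \<subseteq> f ` ((\<lambda>s. (l s, r s)) -` (F1 \<times> F2) \<inter> G)"
  proof
    fix y assume "y \<in> f ` G \<inter> (N1 \<inter> N2)"
    then obtain s where s: "s \<in> G" "y = f s" "f s \<in> N1" "f s \<in> N2"
      by blast
    then have "l s \<in> F1" "r s \<in> F2"
      using F1[of "f s" "l s"] F2[of "f s" "r s"] l[OF s(1)] r[OF s(1)] by auto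
    with s(1,2) show "y \<in> f ` ((\<lambda>s. (l s, r s)) -` (F1 \<times> F2) \<inter> G)"
      by blast
  qed
  moreover have "finite (f ` ((\<lambda>s. (l s, r s)) -` (F1 \<times> F2) \<inter> G))"
    using finite_vimage_IntI[OF finite_cartesian_product[OF N1(3) N2(3)] inj] by blast
  moreover have "infinite (f ` G \<inter> (N1 \<inter> N2))"
    using limit openin_Int[OF N1(1) N2(1)] N1(2) N2(2)
    unfolding derived_set_of_infinite_openin[OF X] by blast
  ultimately show False
    using finite_subset by blast
qed


section \<open>Graph inverse semigroups\<close>

lemma path_prefix_refl [simp]: "path_prefix u u"
  by (simp add: path_prefix_def)

lemma path_cat_rest_refl [simp]: "path_cat u (path_rest rng v v) = u"
  by (simp add: path_cat_def path_rest_def)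

lemma path_prefix_antisym: "path_prefix u v \<Longrightarrow> path_prefix v u \<Longrightarrow> u = v"
  by (auto simp: path_prefix_def prod_eq_iff)

lemma is_path_append_left:
  assumes "is_path V Ed src rng (p, xs @ ys)"
  shows "is_path V Ed src rng (p, xs)"
proof -
  have "rng (xs ! i) = src (xs ! Suc i)" if "Suc i < length xs" for i
    using assms that unfolding is_path_def by (auto simp: nth_append dest!: spec[of _ i])
  with assms show ?thesis
    unfolding is_path_def by auto
qed

lemma GZero_in_gis_carrier [simp]: "GZero \<in> gis_carrier V Ed src rng"
  by (simp add: gis_carrier_def)

lemma GElem_in_gis_carrier_iff [simp]:
  "GElem u v \<in> gis_carrier V Ed src rng \<longleftrightarrow>
     is_path V Ed src rng u \<and> is_path V Ed src rng v \<and> path_rng rng u = path_rng rng v"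
  unfolding gis_carrier_def by blast

lemma gis_mult_zero_right [simp]: "gis_mult rng x GZero = GZero"
  by (cases x) auto

lemma gis_mult_idem_idem:
  "gis_mult rng (GElem u u) (GElem v v) =
     (if path_prefix u v then GElem v v else if path_prefix v u then GElem u u else GZero)"
  by (cases u; cases v) (auto simp: path_prefix_def path_cat_def path_rest_def)

lemma gis_mult_idem_commute: "gis_mult rng (GElem u u) (GElem v v) = gis_mult rng (GElem v v) (GElem u u)"
  unfolding gis_mult_idem_idem by (auto dest: path_prefix_antisym)

lemma gis_idempotent_iff: "gis_mult rng x x = x \<longleftrightarrow> x = GZero \<or> (\<exists>u. x = GElem u u)"
proof (cases x)
  case (GElem u v)
  obtain p xs q ys where "u = (p, xs)" "v = (q, ys)"
    by (cases u, cases v)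
  with GElem show ?thesis
    by (auto simp: path_prefix_def path_cat_def path_rest_def)
qed simp

lemma gis_mult_idem_extension:
  "gis_mult rng (GElem (p, xs) (p, xs)) (GElem (p, xs @ ys) (p, xs @ ys)) = GElem (p, xs @ ys) (p, xs @ ys)"
  unfolding gis_mult_idem_idem by (simp add: path_prefix_def)

lemma gis_mult_idem_siblings:
  "f \<noteq> f' \<Longrightarrow> gis_mult rng (GElem (p, xs @ [f]) (p, xs @ [f])) (GElem (p, xs @ [f']) (p, xs @ [f'])) = GZero"
  unfolding gis_mult_idem_idem by (simp add: path_prefix_def)

lemma gis_mult_idem_nonzero_cases:
  assumes "gis_mult rng (GElem (p, xs) (p, xs)) (GElem u u) \<noteq> GZero"
  obtains (above) k where "k < length xs" "u = (p, take k xs)"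
    | (equal) "u = (p, xs)"
    | (below) f z where "u = (p, xs @ f # z)"
proof -
  consider ws where "u = (p, xs @ ws)" | ws where "fst u = p" "xs = snd u @ ws"
    using assms by (cases u) (auto simp: gis_mult_idem_idem path_prefix_def split: if_splits)
  then show thesis
  proof cases
    case (1 ws)
    then show thesis
      using that(2,3) by (cases ws) auto
  next
    case (2 ws)
    then show thesis
      using that(1)[of "length (snd u)"] that(2) by (cases ws) (auto simp: prod_eq_iff)
  qed
qed

(* For x = u v^-1 these are the idempotents x x^-1 = u u^-1 and x^-1 x = v v^-1. *)
definition gis_left_unit :: "('v, 'e) gis \<Rightarrow> ('v, 'e) gis" where
  "gis_left_unit x = (case x of GZero \<Rightarrow> GZero | GElem u v \<Rightarrow> GElem u u)"

definition gis_right_unit :: "('v, 'e) gis \<Rightarrow> ('v, 'e) gis" where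
  "gis_right_unit x = (case x of GZero \<Rightarrow> GZero | GElem u v \<Rightarrow> GElem v v)"

lemma gis_left_unit_in_carrier:
  "x \<in> gis_carrier V Ed src rng \<Longrightarrow> gis_left_unit x \<in> gis_carrier V Ed src rng"
  by (cases x) (auto simp: gis_left_unit_def)

lemma gis_right_unit_in_carrier:
  "x \<in> gis_carrier V Ed src rng \<Longrightarrow> gis_right_unit x \<in> gis_carrier V Ed src rng"
  by (cases x) (auto simp: gis_right_unit_def)

lemma gis_left_unit_idempotent: "gis_mult rng (gis_left_unit x) (gis_left_unit x) = gis_left_unit x"
  by (auto simp: gis_left_unit_def gis_idempotent_iff split: gis.split)

lemma gis_right_unit_idempotent: "gis_mult rng (gis_right_unit x) (gis_right_unit x) = gis_right_unit x"
  by (auto simp: gis_right_unit_def gis_idempotent_iff split: gis.split)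

lemma gis_mult_left_unit: "gis_mult rng (gis_left_unit x) x = x"
  by (cases x) (auto simp: gis_left_unit_def)

lemma gis_mult_right_unit: "gis_mult rng x (gis_right_unit x) = x"
  by (cases x) (auto simp: gis_right_unit_def)

lemma inj_gis_units: "inj (\<lambda>x. (gis_left_unit x, gis_right_unit x))"
proof (rule injI)
  fix x y :: "('v, 'e) gis"
  assume "(gis_left_unit x, gis_right_unit x) = (gis_left_unit y, gis_right_unit y)"
  then show "x = y"
    by (cases x; cases y) (auto simp: gis_left_unit_def gis_right_unit_def)
qed

lemma inj_on_gis_units_comp:
  assumes "inj_on h (gis_carrier V Ed src rng)"
  shows "inj_on (\<lambda>x. (h (gis_left_unit x), h (gis_right_unit x))) (gis_carrier V Ed src rng)"
proof (rule inj_onI)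
  fix x y assume xy: "x \<in> gis_carrier V Ed src rng" "y \<in> gis_carrier V Ed src rng"
    and eq: "(h (gis_left_unit x), h (gis_right_unit x)) = (h (gis_left_unit y), h (gis_right_unit y))"
  have "gis_left_unit x = gis_left_unit y" "gis_right_unit x = gis_right_unit y"
    using eq inj_onD[OF assms _ gis_left_unit_in_carrier[OF xy(1)] gis_left_unit_in_carrier[OF xy(2)]]
      inj_onD[OF assms _ gis_right_unit_in_carrier[OF xy(1)] gis_right_unit_in_carrier[OF xy(2)]]
    by auto
  then show "x = y"
    using inj_gis_units by (auto dest: injD)
qed

lemma gis_units_hom_image:
  assumes carrier: "topspace T = gis_carrier V Ed src rng"
    and hom: "\<forall>x\<in>topspace T. \<forall>y\<in>topspace T. h (gis_mult rng x y) = m (h x) (h y)"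
    and s: "s \<in> topspace T"
  shows "h (gis_left_unit s) \<in> h ` {x \<in> topspace T. gis_mult rng x x = x} \<and> m (h (gis_left_unit s)) (h s) = h s"
    and "h (gis_right_unit s) \<in> h ` {x \<in> topspace T. gis_mult rng x x = x} \<and> m (h s) (h (gis_right_unit s)) = h s"
proof -
  have units: "gis_left_unit s \<in> topspace T" "gis_right_unit s \<in> topspace T"
    using s gis_left_unit_in_carrier gis_right_unit_in_carrier by (simp_all add: carrier)
  show "h (gis_left_unit s) \<in> h ` {x \<in> topspace T. gis_mult rng x x = x} \<and> m (h (gis_left_unit s)) (h s) = h s"
    using units(1) hom[rule_format, OF units(1) s] by (simp add: gis_left_unit_idempotent gis_mult_left_unit)
  show "h (gis_right_unit s) \<in> h ` {x \<in> topspace T. gis_mult rng x x = x} \<and> m (h s) (h (gis_right_unit s)) = h s"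
    using units(2) hom[rule_format, OF s units(2)] by (simp add: gis_right_unit_idempotent gis_mult_right_unit)
qed


section \<open>Isolated idempotents in a topological graph inverse semigroup\<close>

lemma gis_idempotents_near_below:
  fixes T :: "('v, 'e) gis topology"
  assumes T: "Hausdorff_space T" and zero: "GZero \<in> topspace T"
    and P: "GElem (p, xs) (p, xs) \<in> topspace T"
    and cont: "continuous_map T T (gis_mult rng (GElem (p, xs) (p, xs)))"
  obtains W where "openin T W" "GElem (p, xs) (p, xs) \<in> W"
    "\<And>g. g \<in> W \<Longrightarrow> gis_mult rng g g = g \<Longrightarrow> g \<noteq> GElem (p, xs) (p, xs) \<Longrightarrow>
       \<exists>f z. g = GElem (p, xs @ f # z) (p, xs @ f # z)"
proof -
  let ?P = "GElem (p, xs) (p, xs)"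
  (* Near P the product P g stays away from 0, so g is comparable with P in the prefix
     order; the finitely many idempotents strictly above P are removed by hand. *)
  define killed where "killed = {g \<in> topspace T. gis_mult rng ?P g = GZero}"
  define above where "above = (\<lambda>k. GElem (p, take k xs) (p, take k xs)) ` {..<length xs}"
  define W where "W = topspace T - killed - topspace T \<inter> above"
  have "closedin T killed"
    using closedin_continuous_maps_eq[OF T cont, of "\<lambda>_. GZero"] zero unfolding killed_def by simp
  moreover have "closedin T (topspace T \<inter> above)"
    by (rule closedin_Hausdorff_finite[OF T]) (auto simp: above_def)
  ultimately have "openin T W"
    unfolding W_def by (intro openin_diff openin_topspace)
  moreover have "?P \<in> W"
  proof -
    have "?P \<notin> above"
      by (auto simp: above_def) (metis not_le take_all_iff)
    with P show ?thesis
      by (simp add: W_def killed_def gis_mult_idem_idem)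
  qed
  moreover have "\<exists>f z. g = GElem (p, xs @ f # z) (p, xs @ f # z)"
    if g: "g \<in> W" "gis_mult rng g g = g" "g \<noteq> ?P" for g
  proof -
    have "g \<noteq> GZero"
      using g(1) zero by (auto simp: W_def killed_def)
    then obtain u where u: "g = GElem u u"
      using g(2) gis_idempotent_iff by blast
    have "gis_mult rng ?P (GElem u u) \<noteq> GZero"
      using g(1) u by (simp add: W_def killed_def)
    then show ?thesis
    proof (cases rule: gis_mult_idem_nonzero_cases)
      case (above k)
      then have "g \<in> above"
        by (auto simp: above_def u)
      with g(1) show ?thesis
        by (auto simp: W_def)
    next
      case equal
      with g(3) u show ?thesis
        by simp
    next
      case (below f z)
      with u show ?thesis
        by blast
    qed
  qed
  ultimately show thesis
    using that by blast
qed

lemma gis_nonzero_idempotent_isolated: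
  fixes T :: "('v, 'e) gis topology"
  assumes carrier: "topspace T = gis_carrier V Ed src rng" and T: "Hausdorff_space T"
    and cont: "continuous_map (prod_topology T T) T (\<lambda>(x, y). gis_mult rng x y)"
    and compact: "compactin T {x \<in> topspace T. gis_mult rng x x = x}"
    and u_in: "GElem u u \<in> topspace T"
  shows "GElem u u \<notin> T derived_set_of {x \<in> topspace T. gis_mult rng x x = x}"
proof
  obtain p xs where u: "u = (p, xs)"
    by fastforce
  define Es where "Es = {x \<in> topspace T. gis_mult rng x x = x}"
  define P where "P = GElem (p, xs) (p, xs)"
  define child where "child f = GElem (p, xs @ [f]) (p, xs @ [f])" for f
  define D where "D = {child f | f. child f \<in> topspace T}"
  assume limit: "GElem u u \<in> T derived_set_of Es"
  have P_in: "P \<in> topspace T"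
    using u_in by (simp add: P_def u)
  have D_Es: "D \<subseteq> Es"
    by (auto simp: D_def Es_def child_def gis_idempotent_iff)
  have P_child: "gis_mult rng P (child f) = child f" for f
    unfolding P_def child_def by (rule gis_mult_idem_extension)
  have child_P: "gis_mult rng (child f) P = child f" for f
    unfolding P_def child_def by (subst gis_mult_idem_commute) (rule gis_mult_idem_extension)
  (* The children of P are pairwise orthogonal idempotents below P, and every idempotent
     strictly below P lies below one of them. If P were not a limit of its children,
     compactness would keep idempotents below P away from P. *)
  have "P \<in> T derived_set_of D"
  proof (rule ccontr)
    assume isolated_P: "P \<notin> T derived_set_of D"
    have "e \<notin> T derived_set_of D" if e: "e \<in> Es" "gis_mult rng e P = P" for e
    proof (cases "e = P")
      case False
      have "e \<noteq> GZero"
        using e(2) by (auto simp: P_def)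
      then obtain v where v: "e = GElem v v"
        using e(1) by (auto simp: Es_def gis_idempotent_iff)
      have "gis_mult rng P e = P"
        using e(2) unfolding v P_def by (subst gis_mult_idem_commute)
      with False have "gis_mult rng P e \<noteq> e"
        by simp
      define U where "U = topspace T - {k \<in> topspace T. gis_mult rng P k = k}"
      have "closedin T {k \<in> topspace T. gis_mult rng P k = k}"
        using closedin_continuous_maps_eq[OF T continuous_map_binop_left[OF cont P_in] continuous_map_id]
        by simp
      then have "openin T U"
        unfolding U_def by (rule openin_diff[OF openin_topspace])
      moreover have "e \<in> U" "U \<inter> D = {}"
        using e(1) \<open>gis_mult rng P e \<noteq> e\<close> P_child by (auto simp: U_def Es_def D_def)
      ultimately show ?thesis
        unfolding in_derived_set_of by blast
    qed (use isolated_P in simp)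
    moreover have "gis_mult rng k P \<noteq> P" if "k \<in> D" for k
      using that child_P by (auto simp: D_def P_def child_def)
    ultimately obtain N where N: "openin T N" "P \<in> N"
        and no_child: "\<And>g k. g \<in> N \<Longrightarrow> k \<in> D \<Longrightarrow> gis_mult rng k g \<noteq> g"
      using no_left_units_near[OF T cont compact[folded Es_def] D_Es P_in] by blast
    have zero: "GZero \<in> topspace T"
      by (simp add: carrier)
    obtain W where W: "openin T W" "P \<in> W"
        and below: "\<And>g. g \<in> W \<Longrightarrow> gis_mult rng g g = g \<Longrightarrow> g \<noteq> P \<Longrightarrow>
                       \<exists>f z. g = GElem (p, xs @ f # z) (p, xs @ f # z)"
      using gis_idempotents_near_below[OF T zero P_in[unfolded P_def] continuous_map_binop_left[OF cont P_in, unfolded P_def]]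
      unfolding P_def by blast
    obtain g where g: "g \<noteq> P" "g \<in> Es" "g \<in> N \<inter> W"
      using in_derived_set_ofE[OF limit openin_Int[OF N(1) W(1)]] N(2) W(2) unfolding P_def u by blast
    then obtain f z where fz: "g = GElem (p, xs @ f # z) (p, xs @ f # z)"
      using below[of g] by (auto simp: Es_def)
    have "is_path V Ed src rng (p, (xs @ [f]) @ z)"
      using g(2) carrier fz by (simp add: Es_def)
    then have "child f \<in> D"
      using carrier is_path_append_left unfolding D_def child_def by fastforce
    moreover have "gis_mult rng (child f) g = g"
      unfolding fz child_def using gis_mult_idem_extension[of rng p "xs @ [f]" z] by simp
    ultimately show False
      using no_child g(3) by blast
  qed
  moreover have "\<forall>k\<in>D. \<forall>k'\<in>D. k \<noteq> k' \<longrightarrow> gis_mult rng k k' = GZero"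
  proof (intro ballI impI)
    fix k k' assume "k \<in> D" "k' \<in> D" "k \<noteq> k'"
    then obtain f f' where kk': "k = child f" "k' = child f'" and "f \<noteq> f'"
      by (auto simp: D_def)
    show "gis_mult rng k k' = GZero"
      unfolding kk' child_def by (rule gis_mult_idem_siblings[OF \<open>f \<noteq> f'\<close>])
  qed
  ultimately have "gis_mult rng P P = GZero"
    by (rule derived_set_of_orthogonal[OF T cont])
  then show False
    by (simp add: P_def)
qed

lemma embedded_gis_idempotents_isolated:
  fixes T :: "('v, 'e) gis topology"
  assumes carrier: "topspace T = gis_carrier V Ed src rng" and T: "Hausdorff_space T"
    and cont: "continuous_map (prod_topology T T) T (\<lambda>(x, y). gis_mult rng x y)"
    and compact: "compactin T {x \<in> topspace T. gis_mult rng x x = x}"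
    and emb: "embedding_map T Y h"
  shows "h ` {x \<in> topspace T. gis_mult rng x x = x} \<inter> Y derived_set_of (h ` {x \<in> topspace T. gis_mult rng x x = x})
           \<subseteq> {h GZero}"
proof
  fix e assume "e \<in> h ` {x \<in> topspace T. gis_mult rng x x = x} \<inter>
                      Y derived_set_of (h ` {x \<in> topspace T. gis_mult rng x x = x})"
  then obtain g where g: "g \<in> topspace T" "gis_mult rng g g = g" "e = h g"
      and limit: "h g \<in> Y derived_set_of (h ` {x \<in> topspace T. gis_mult rng x x = x})"
    by blast
  have "g = GZero"
  proof (rule ccontr)
    assume "g \<noteq> GZero"
    then obtain u where "g = GElem u u"
      using g(2) gis_idempotent_iff[of rng g] by auto
    with g(1) limit show False
      using gis_nonzero_idempotent_isolated[OF carrier T cont compact] embedding_map_derived_set_of[OF emb]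
      by simp
  qed
  with g(3) show "e \<in> {h GZero}"
    by simp
qed

lemma embedded_gis_non_isolated_idempotent_moves:
  fixes T :: "('v, 'e) gis topology"
  assumes carrier: "topspace T = gis_carrier V Ed src rng" and T: "Hausdorff_space T"
    and cont: "continuous_map (prod_topology T T) T (\<lambda>(x, y). gis_mult rng x y)"
    and compact: "compactin T {x \<in> topspace T. gis_mult rng x x = x}"
    and S: "Hausdorff_space S" "continuous_map (prod_topology S S) S (\<lambda>(x, y). m x y)"
    and emb: "embedding_map T S h"
    and hom: "\<forall>x\<in>topspace T. \<forall>y\<in>topspace T. h (gis_mult rng x y) = m (h x) (h y)"
    and x: "x \<in> S closure_of (h ` topspace T)" "x \<notin> h ` topspace T"
    and e: "e \<in> h ` {x \<in> topspace T. gis_mult rng x x = x} \<inter>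
              S derived_set_of (h ` {x \<in> topspace T. gis_mult rng x x = x})"
  shows "m e x \<noteq> x \<and> m x e \<noteq> x"
proof -
  have zero: "GZero \<in> topspace T"
    by (simp add: carrier)
  have image: "h ` topspace T \<subseteq> topspace S"
    using emb by (intro continuous_map_image_subset_topspace embedding_map_imp_continuous_map)
  have "m (h GZero) x = h GZero \<and> m x (h GZero) = h GZero"
    using x(1) zero image by (intro closure_of_zero[OF S]) (auto simp: hom[rule_format, symmetric])
  moreover have "e = h GZero"
    using embedded_gis_idempotents_isolated[OF carrier T cont compact emb] e by blast
  ultimately show ?thesis
    using x(2) zero by auto
qed

theorem lemma2p5:
  fixes V :: "'v set" and Ed :: "'e set" and src rng :: "'e \<Rightarrow> 'v"
    and T :: "('v, 'e) gis topology"
    and TS :: "'s topology" and m :: "'s \<Rightarrow> 's \<Rightarrow> 's"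
    and h :: "('v, 'e) gis \<Rightarrow> 's"
  assumes graph: "is_graph V Ed src rng"
    and carrier: "topspace T = gis_carrier V Ed src rng"
    and tsg: "top_semigroup T (gis_mult rng)"
    and idem_compact: "compactin T {x \<in> topspace T. gis_mult rng x x = x}"
    and S: "top_semigroup TS m"
    and emb: "embedding_map T TS h"
    and hom: "\<forall>x\<in>topspace T. \<forall>y\<in>topspace T. h (gis_mult rng x y) = m (h x) (h y)"
  shows "closedin TS (h ` topspace T)"
proof -
  have T: "Hausdorff_space T" "continuous_map (prod_topology T T) T (\<lambda>(x, y). gis_mult rng x y)"
    and TS: "Hausdorff_space TS" "continuous_map (prod_topology TS TS) TS (\<lambda>(x, y). m x y)"
    using tsg S by (simp_all add: top_semigroup_def)
  have h: "continuous_map T TS h" "inj_on h (gis_carrier V Ed src rng)"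
    using emb embedding_map_imp_continuous_map embedding_map_imp_inj_on carrier by metis+
  have "x \<in> h ` topspace T" if limit: "x \<in> TS derived_set_of (h ` topspace T)" for x
  proof (rule ccontr)
    assume "x \<notin> h ` topspace T"
    then have "m e x \<noteq> x \<and> m x e \<noteq> x"
      if "e \<in> h ` {x \<in> topspace T. gis_mult rng x x = x} \<inter>
            TS derived_set_of (h ` {x \<in> topspace T. gis_mult rng x x = x})" for e
      using embedded_gis_non_isolated_idempotent_moves[OF carrier T idem_compact TS emb hom
          subsetD[OF derived_set_of_subset_closure_of limit] _ that] by blast
    moreover have "x \<in> topspace TS"
      using subsetD[OF derived_set_of_subset_topspace limit] .
    ultimately have "x \<notin> TS derived_set_of (h ` topspace T)"
      by (intro not_in_derived_set_of_two_sided_units[OF TS image_compactin[OF idem_compact h(1)]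
            _ gis_units_hom_image[OF carrier hom] inj_on_gis_units_comp[OF h(2), folded carrier]])
    with limit show False
      by contradiction
  qed
  moreover have "h ` topspace T \<subseteq> topspace TS"
    using h(1) by (rule continuous_map_image_subset_topspace)
  ultimately show ?thesis
    using derived_set_subset by blast
qed

end
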